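(* There is no homomorphism $G^2 \to G^1$.
   Context: Graphs are simple and loopless; homomorphisms are edge-preserving vertex maps. $G^1$ is the graph with vertex set $\omega\times\{0,1\}$ whose edges are all pairs $\{(n,i),(m,i)\}$ with $n\ne m$, $i\in\{0,1\}$ and $\lfloor\sqrt n\rfloor=\lfloor\sqrt m\rfloor$, together with all pairs $\{(n,0),(m,1)\}$ with $n<m$. $G^2$ is the graph with vertex set $\{r\}\cup A_1\cup A_2$ (pairwise disjoint), where $A_1$ is the disjoint union of complete graphs $K^1_i$ on $i$ vertices ($i\ge1$) and $A_2$ is the disjoint union of complete graphs $K^2_{x,j}$ on $j$ vertices for $x\in A_1$, $j\ge 1$. The edges of $G^2$ are the edges of all these complete graphs, all pairs $\{r,x\}$ with $x\in A_1$, and all pairs $\{x,y\}$ with $x\in A_1$ and $y\in V(K^2_{x,j})$ for some $j$. *)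

theory Defs
  imports Complex_Main
begin

text \<open>A graph is given by a vertex set V and an edge relation E (intended symmetric,
irreflexive, on V). A homomorphism maps vertices to vertices and edges to edges.\<close>

definition is_hom :: "'a set \<Rightarrow> ('a \<Rightarrow> 'a \<Rightarrow> bool) \<Rightarrow> 'b set \<Rightarrow> ('b \<Rightarrow> 'b \<Rightarrow> bool) \<Rightarrow> ('a \<Rightarrow> 'b) \<Rightarrow> bool" where
  "is_hom V E W F f \<longleftrightarrow>
     (\<forall>v\<in>V. f v \<in> W) \<and> (\<forall>u\<in>V. \<forall>v\<in>V. E u v \<longrightarrow> F (f u) (f v))"

definition G1_V :: "(nat \<times> nat) set" where
  "G1_V = {(n, i). i \<in> {0, 1}}"

definition G1_E :: "nat \<times> nat \<Rightarrow> nat \<times> nat \<Rightarrow> bool" where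
  "G1_E a b \<longleftrightarrow> a \<in> G1_V \<and> b \<in> G1_V \<and>
     ((snd a = snd b \<and> fst a \<noteq> fst b \<and>
        \<lfloor>sqrt (real (fst a))\<rfloor> = \<lfloor>sqrt (real (fst b))\<rfloor>)
      \<or> (snd a = 0 \<and> snd b = 1 \<and> fst a < fst b)
      \<or> (snd b = 0 \<and> snd a = 1 \<and> fst b < fst a))"

text \<open>Root is r; A1 i k is the k-th vertex (k < i) of the complete graph K^1_i (i \<ge> 1);
A2 i k j l is the l-th vertex (l < j) of K^2_{x,j} where x = A1 i k.\<close>
datatype g2v = Root | A1 nat nat | A2 nat nat nat nat

definition G2_V :: "g2v set" where
  "G2_V = {Root} \<union> {A1 i k | i k. k < i} \<union> {A2 i k j l | i k j l. k < i \<and> l < j}"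

fun G2_adj :: "g2v \<Rightarrow> g2v \<Rightarrow> bool" where
  "G2_adj (A1 i k) (A1 i' k') = (i = i' \<and> k \<noteq> k')"
| "G2_adj (A2 i k j l) (A2 i' k' j' l') = (i = i' \<and> k = k' \<and> j = j' \<and> l \<noteq> l')"
| "G2_adj Root (A1 i k) = True"
| "G2_adj (A1 i k) Root = True"
| "G2_adj (A1 i k) (A2 i' k' j l) = (i = i' \<and> k = k')"
| "G2_adj (A2 i' k' j l) (A1 i k) = (i = i' \<and> k = k')"
| "G2_adj _ _ = False"

definition G2_E :: "g2v \<Rightarrow> g2v \<Rightarrow> bool" where
  "G2_E a b \<longleftrightarrow> a \<in> G2_V \<and> b \<in> G2_V \<and> G2_adj a b"

end

theory Submission
  imports Defs
begin

text \<open>A homomorphism into a loopless graph is injective on cliques, so a vertex adjacent to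
arbitrarily large cliques must be sent to a vertex of infinite degree. In \<open>G\<^sup>1\<close> every vertex
\<open>(b,1)\<close> has finite degree, and every \<open>(a,0)\<close> has only finitely many neighbours in layer \<open>0\<close>.
In \<open>G\<^sup>2\<close> the root and every vertex of \<open>A\<^sub>1\<close> are adjacent to arbitrarily large cliques, so all of
them land in layer \<open>0\<close>; but then a clique \<open>K\<^sup>1\<^sub>i\<close> larger than the layer-\<open>0\<close> neighbourhood of
the image of the root has nowhere to go.\<close>

definition clique :: "('a \<Rightarrow> 'a \<Rightarrow> bool) \<Rightarrow> 'a set \<Rightarrow> bool" where
  "clique E K \<longleftrightarrow> (\<forall>x\<in>K. \<forall>y\<in>K. x \<noteq> y \<longrightarrow> E x y)"

lemma hom_inj_on_clique:
  assumes "is_hom V E W F f" and "\<And>y. \<not> F y y" and "K \<subseteq> V" and "clique E K"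
  shows "inj_on f K"
proof (rule inj_onI, rule ccontr)
  fix x y assume "x \<in> K" "y \<in> K" "f x = f y" "x \<noteq> y"
  then have "F (f x) (f y)"
    using assms(1,3,4) unfolding is_hom_def clique_def by blast
  with \<open>f x = f y\<close> assms(2) show False by simp
qed

lemma hom_clique_card_le:
  assumes "is_hom V E W F f" and "\<And>y. \<not> F y y" and "K \<subseteq> V" and "clique E K"
    and "f ` K \<subseteq> S" and "finite S"
  shows "card K \<le> card S"
  using card_inj_on_le[OF hom_inj_on_clique[OF assms(1-4)] assms(5,6)] .

lemma hom_infinite_nbhd:
  assumes hom: "is_hom V E W F f" and irrefl: "\<And>y. \<not> F y y" and "v \<in> V"
    and large: "\<And>n. \<exists>K. K \<subseteq> V \<and> clique E K \<and> card K = n \<and> (\<forall>x\<in>K. E v x)"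
  shows "infinite {y. F (f v) y}"
proof
  assume fin: "finite {y. F (f v) y}"
  obtain K where K: "K \<subseteq> V" "clique E K" "card K = card {y. F (f v) y} + 1"
    and adj: "\<forall>x\<in>K. E v x"
    using large by blast
  have "f ` K \<subseteq> {y. F (f v) y}"
    using hom \<open>v \<in> V\<close> K(1) adj unfolding is_hom_def by blast
  from hom_clique_card_le[OF hom irrefl K(1,2) this fin] K(3) show False by simp
qed

lemma le_square_Suc_if_floor_sqrt_eq:
  assumes "\<lfloor>sqrt (real n)\<rfloor> = \<lfloor>sqrt (real a)\<rfloor>"
  shows "n \<le> (a + 1)\<^sup>2"
proof -
  have "sqrt (real a) \<le> real a"
    by (cases "a = 0") (auto intro: real_sqrt_le_mono[of "real a" "real a * real a", simplified])
  then have "sqrt (real n) < real a + 1"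
    using assms by linarith
  then have "real n < (real a + 1)\<^sup>2"
    using real_sqrt_less_iff[of "real n" "(real a + 1)\<^sup>2"] by simp
  then show ?thesis
    by (metis less_imp_le of_nat_1 of_nat_add of_nat_less_iff of_nat_power)
qed

lemma G1_E_irrefl: "\<not> G1_E y y"
  unfolding G1_E_def by auto

lemma G1_layer1_nbhd_finite:
  assumes "snd x = 1"
  shows "finite {y. G1_E x y}"
proof (rule finite_subset)
  show "{y. G1_E x y} \<subseteq> {..(fst x + 1)\<^sup>2} \<times> {0, 1}"
    using assms le_square_Suc_if_floor_sqrt_eq[of _ "fst x"]
    by (auto simp: G1_E_def G1_V_def power2_eq_square)
qed simp

lemma G1_same_layer_nbhd_finite: "finite {y. G1_E x y \<and> snd y = snd x}"
proof (rule finite_subset)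
  show "{y. G1_E x y \<and> snd y = snd x} \<subseteq> {..(fst x + 1)\<^sup>2} \<times> {snd x}"
    using le_square_Suc_if_floor_sqrt_eq[of _ "fst x"] by (auto simp: G1_E_def)
qed simp

lemma G1_infinite_nbhd_layer0:
  assumes "x \<in> G1_V" and "infinite {y. G1_E x y}"
  shows "snd x = 0"
  using assms G1_layer1_nbhd_finite unfolding G1_V_def by auto

definition A1_clique :: "nat \<Rightarrow> g2v set" where
  "A1_clique i = A1 i ` {..<i}"

definition A2_clique :: "nat \<Rightarrow> nat \<Rightarrow> nat \<Rightarrow> g2v set" where
  "A2_clique i k j = A2 i k j ` {..<j}"

lemma card_A1_clique: "card (A1_clique i) = i"
  unfolding A1_clique_def by (subst card_image) (auto simp: inj_on_def)

lemma A1_clique_is_clique: "A1_clique i \<subseteq> G2_V \<and> clique G2_E (A1_clique i)"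
  unfolding A1_clique_def clique_def G2_E_def G2_V_def by auto

lemma G2_E_Root_A1_clique: "x \<in> A1_clique i \<Longrightarrow> G2_E Root x"
  unfolding A1_clique_def G2_E_def G2_V_def by auto

lemma card_A2_clique: "card (A2_clique i k j) = j"
  unfolding A2_clique_def by (subst card_image) (auto simp: inj_on_def)

lemma A2_clique_is_clique: "k < i \<Longrightarrow> A2_clique i k j \<subseteq> G2_V \<and> clique G2_E (A2_clique i k j)"
  unfolding A2_clique_def clique_def G2_E_def G2_V_def by auto

lemma G2_E_A1_A2_clique: "k < i \<Longrightarrow> x \<in> A2_clique i k j \<Longrightarrow> G2_E (A1 i k) x"
  unfolding A2_clique_def G2_E_def G2_V_def by auto

lemma G2_Root_large_cliques:
  "\<exists>K. K \<subseteq> G2_V \<and> clique G2_E K \<and> card K = n \<and> (\<forall>x\<in>K. G2_E Root x)"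
  using A1_clique_is_clique[of n] card_A1_clique[of n] G2_E_Root_A1_clique[of _ n] by blast

lemma G2_A1_large_cliques:
  "k < i \<Longrightarrow> \<exists>K. K \<subseteq> G2_V \<and> clique G2_E K \<and> card K = n \<and> (\<forall>x\<in>K. G2_E (A1 i k) x)"
  using A2_clique_is_clique[of k i n] card_A2_clique[of i k n] G2_E_A1_A2_clique[of k i _ n] by blast

lemma hom_G2_G1_layer0:
  assumes hom: "is_hom G2_V G2_E G1_V G1_E f"
    and v: "v = Root \<or> (\<exists>i k. k < i \<and> v = A1 i k)"
  shows "snd (f v) = 0"
proof (rule G1_infinite_nbhd_layer0)
  have "v \<in> G2_V" using v unfolding G2_V_def by auto
  then show "f v \<in> G1_V" using hom unfolding is_hom_def by blast
  have "\<exists>K. K \<subseteq> G2_V \<and> clique G2_E K \<and> card K = n \<and> (\<forall>x\<in>K. G2_E v x)" for n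
    using v G2_Root_large_cliques G2_A1_large_cliques by metis
  from hom_infinite_nbhd[OF hom G1_E_irrefl \<open>v \<in> G2_V\<close> this]
  show "infinite {y. G1_E (f v) y}" .
qed

theorem claim2:
  shows "\<not> (\<exists>f. is_hom G2_V G2_E G1_V G1_E f)"
proof
  assume "\<exists>f. is_hom G2_V G2_E G1_V G1_E f"
  then obtain f where hom: "is_hom G2_V G2_E G1_V G1_E f" ..
  define N where "N = {y. G1_E (f Root) y \<and> snd y = snd (f Root)}"
  define K where "K = A1_clique (card N + 1)"
  have "f ` K \<subseteq> N"
  proof
    fix y assume "y \<in> f ` K"
    then obtain x where x: "x \<in> K" "y = f x" by blast
    then obtain i k where "k < i" "x = A1 i k" unfolding K_def A1_clique_def by blast
    then have "snd (f x) = snd (f Root)"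
      using hom_G2_G1_layer0[OF hom] by metis
    moreover have "G1_E (f Root) (f x)"
      using hom G2_E_Root_A1_clique[of x] x(1) unfolding is_hom_def G2_E_def K_def by blast
    ultimately show "y \<in> N" unfolding N_def x(2) by blast
  qed
  moreover have "finite N"
    unfolding N_def by (rule G1_same_layer_nbhd_finite)
  ultimately have "card K \<le> card N"
    using hom_clique_card_le[OF hom G1_E_irrefl] A1_clique_is_clique unfolding K_def by blast
  then show False
    unfolding K_def card_A1_clique by simp
qed

end
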